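(* Let $d \geq 3$ and let \[ H(\mathbf{x}) = \left(\prod_{i=1}^d (1-x_i)\right)\left(1 - \sum_{i=2}^d (i-1)\, e_i(\mathbf{x})\right), \qquad \mathbf{x}=(x_1,\ldots,x_d)\in\mathbb{C}^d, \] where $e_i$ is the $i$th elementary symmetric polynomial in $x_1,\ldots,x_d$. Let $\mathcal{V} = \{\mathbf{x} \in \mathbb{C}^d : H(\mathbf{x}) = 0\}$ and $\mathbf{c} = \left(\frac{1}{d-1}, \ldots, \frac{1}{d-1}\right) \in \mathbb{C}^d$. Then $\mathbf{c}$ is a strictly minimal point of $\mathcal{V}$.
   Context: For $\mathbf{x}\in\mathbb{C}^d$, the polydisk is $\mathbf{D}(\mathbf{x}) = \{\mathbf{x}' : |x_i'| \le |x_i| \text{ for all } i\}$ and the torus is $\mathbf{T}(\mathbf{x}) = \{\mathbf{x}' : |x_i'| = |x_i| \text{ for all } i\}$. A point $\mathbf{x}\in\mathcal{V}$ is minimal if all its coordinates are nonzero and $\mathcal{V}\cap\mathbf{D}(\mathbf{x}) \subset \mathbf{T}(\mathbf{x})$; it is strictly minimal if it is minimal and it is the only point of $\mathcal{V}$ in $\mathbf{T}(\mathbf{x})$. *)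

theory Defs
  imports "HOL-Analysis.Analysis"
begin

text \<open>Points of C^d are vectors of type complex ^ 'n with d = CARD('n).\<close>

definition polydisk :: "complex ^ 'n \<Rightarrow> (complex ^ 'n) set" where
  "polydisk x = {x'. \<forall>i. norm (x' $ i) \<le> norm (x $ i)}"

definition torus :: "complex ^ 'n \<Rightarrow> (complex ^ 'n) set" where
  "torus x = {x'. \<forall>i. norm (x' $ i) = norm (x $ i)}"

definition minimal_point :: "(complex ^ 'n) set \<Rightarrow> complex ^ 'n \<Rightarrow> bool" where
  "minimal_point V x \<longleftrightarrow> x \<in> V \<and> (\<forall>i. x $ i \<noteq> 0) \<and> V \<inter> polydisk x \<subseteq> torus x"

definition strictly_minimal_point :: "(complex ^ 'n) set \<Rightarrow> complex ^ 'n \<Rightarrow> bool" where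
  "strictly_minimal_point V x \<longleftrightarrow> minimal_point V x \<and> V \<inter> torus x = {x}"

definition elem_sym :: "nat \<Rightarrow> complex ^ 'n \<Rightarrow> complex" where
  "elem_sym k x = (\<Sum>S \<in> {S :: 'n set. card S = k}. \<Prod>j\<in>S. x $ j)"

definition Hpoly :: "complex ^ 'n \<Rightarrow> complex" where
  "Hpoly x = (\<Prod>i\<in>UNIV. 1 - x $ i) *
     (1 - (\<Sum>i = 2..CARD('n). of_nat (i - 1) * elem_sym i x))"

end

theory Submission
  imports Defs
begin

text \<open>
  Expanding by subset size, the second factor of H equals
  \<open>\<Sum>\<^sub>S (1 - |S|) \<Prod>\<^sub>j\<^sub>\<in>\<^sub>S x\<^sub>j = \<Prod>\<^sub>j (1 + x\<^sub>j) \<cdot> (1 - \<Sum>\<^sub>j x\<^sub>j / (1 + x\<^sub>j))\<close>.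
  Inside the open unit polydisk the other factors do not vanish, so \<open>\<V>\<close> is cut out there by
  \<open>\<Sum>\<^sub>j x\<^sub>j / (1 + x\<^sub>j) = 1\<close>. The map \<open>z \<mapsto> z / (1 + z)\<close> sends the disk \<open>|z| \<le> r < 1\<close> into the
  half plane \<open>Re \<le> r / (1 + r)\<close>, touching its boundary only at \<open>z = r\<close>. For \<open>r = 1 / (d - 1)\<close>
  this bound is \<open>1 / d\<close>, so on the polydisk of \<open>c\<close> the equation forces every \<open>x\<^sub>j = r\<close>.
\<close>

lemma sum_subsets_card_prod:
  fixes f :: "'a \<Rightarrow> 'b::comm_ring_1"
  assumes "finite A"
  shows "(\<Sum>S\<in>Pow A. of_nat (card S) * prod f S) = (\<Sum>j\<in>A. f j * (\<Prod>k\<in>A - {j}. 1 + f k))"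
proof -
  have subsets_containing: "(\<Sum>S\<in>{S\<in>Pow A. j \<in> S}. prod f S) = f j * (\<Prod>k\<in>A - {j}. 1 + f k)"
    if "j \<in> A" for j
  proof -
    have inj: "inj_on (insert j) (Pow (A - {j}))"
      by (rule inj_onI) (auto simp: insert_ident)
    have img: "insert j ` Pow (A - {j}) = {S\<in>Pow A. j \<in> S}"
    proof
      show "{S\<in>Pow A. j \<in> S} \<subseteq> insert j ` Pow (A - {j})"
      proof
        fix S assume "S \<in> {S\<in>Pow A. j \<in> S}"
        then have "S = insert j (S - {j})" and "S - {j} \<in> Pow (A - {j})" by auto
        then show "S \<in> insert j ` Pow (A - {j})" by (rule image_eqI)
      qed
    qed (use that in auto)
    have "(\<Sum>S\<in>{S\<in>Pow A. j \<in> S}. prod f S) = (\<Sum>B\<in>Pow (A - {j}). prod f (insert j B))"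
      unfolding img[symmetric] sum.reindex[OF inj] by simp
    also have "\<dots> = (\<Sum>B\<in>Pow (A - {j}). f j * prod f B)"
      using assms by (intro sum.cong refl prod.insert) (auto intro: rev_finite_subset)
    also have "\<dots> = f j * (\<Prod>k\<in>A - {j}. 1 + f k)"
      using prod_add[of "A - {j}" f "\<lambda>_. 1"] assms by (simp add: sum_distrib_left add.commute)
    finally show ?thesis .
  qed
  have "(\<Sum>S\<in>Pow A. of_nat (card S) * prod f S) = (\<Sum>S\<in>Pow A. \<Sum>j\<in>A. if j \<in> S then prod f S else 0)"
    using assms by (intro sum.cong) (auto simp: sum.If_cases Int_absorb1)
  also have "\<dots> = (\<Sum>j\<in>A. \<Sum>S\<in>{S\<in>Pow A. j \<in> S}. prod f S)"
    using assms by (subst sum.swap) (intro sum.cong refl sum.inter_filter[symmetric], simp)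
  also have "\<dots> = (\<Sum>j\<in>A. f j * (\<Prod>k\<in>A - {j}. 1 + f k))"
    by (intro sum.cong refl subsets_containing)
  finally show ?thesis .
qed

lemma sum_elem_sym_eq_sum_subsets:
  fixes x :: "complex ^ 'n"
  shows "(\<Sum>i = 0..CARD('n). f i * elem_sym i x) = (\<Sum>S\<in>UNIV. f (card S) * (\<Prod>j\<in>S. x $ j))"
proof -
  have "(\<Sum>S\<in>UNIV. f (card S) * (\<Prod>j\<in>S. x $ j))
      = (\<Sum>i\<in>{0..CARD('n)}. \<Sum>S\<in>{S\<in>UNIV. card S = i}. f (card S) * (\<Prod>j\<in>S. x $ j))"
    by (rule sum.group[symmetric]) (auto simp: card_mono)
  also have "\<dots> = (\<Sum>i = 0..CARD('n). f i * elem_sym i x)"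
    by (rule sum.cong) (auto simp: elem_sym_def sum_distrib_left)
  finally show ?thesis ..
qed

lemma elem_sym_0 [simp]: "elem_sym 0 x = 1"
  by (simp add: elem_sym_def card_eq_0_iff)

lemma Hpoly_second_factor:
  fixes x :: "complex ^ 'n"
  shows "1 - (\<Sum>i = 2..CARD('n). of_nat (i - 1) * elem_sym i x)
       = (\<Sum>S\<in>UNIV. (1 - of_nat (card S)) * (\<Prod>j\<in>S. x $ j))"
proof -
  have "(\<Sum>S\<in>UNIV. (1 - of_nat (card S)) * (\<Prod>j\<in>S. x $ j))
      = (\<Sum>i = 0..CARD('n). (1 - of_nat i) * elem_sym i x)"
    by (rule sum_elem_sym_eq_sum_subsets[symmetric])
  also have "\<dots> = 1 + (\<Sum>i = 2..CARD('n). (1 - of_nat i) * elem_sym i x)"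
    by (simp add: sum.atLeast_Suc_atMost Suc_leI numeral_2_eq_2)
  also have "(\<Sum>i = 2..CARD('n). (1 - of_nat i) * elem_sym i x)
           = - (\<Sum>i = 2..CARD('n). of_nat (i - 1) * elem_sym i x)"
    by (simp add: sum_negf[symmetric], rule sum.cong) (auto simp: of_nat_diff algebra_simps)
  finally show ?thesis by simp
qed

lemma Hpoly_eq:
  fixes x :: "complex ^ 'n"
  assumes "\<And>j. 1 + x $ j \<noteq> 0"
  shows "Hpoly x = (\<Prod>j\<in>UNIV. 1 - x $ j) * (\<Prod>j\<in>UNIV. 1 + x $ j) * (1 - (\<Sum>j\<in>UNIV. x $ j / (1 + x $ j)))"
proof -
  define P where "P = (\<Prod>j\<in>UNIV. 1 + x $ j)"
  have omit_one: "x $ j * (\<Prod>k\<in>UNIV - {j}. 1 + x $ k) = P * (x $ j / (1 + x $ j))" for j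
    using assms[of j] prod.remove[of UNIV j "\<lambda>k. 1 + x $ k"] by (simp add: P_def field_simps)
  have "(\<Sum>S\<in>UNIV. (\<Prod>j\<in>S. x $ j)) = P"
    using prod_add[of "UNIV::'n set" "\<lambda>j. x $ j" "\<lambda>_. 1"] by (simp add: P_def add.commute)
  moreover have "(\<Sum>S\<in>UNIV. of_nat (card S) * (\<Prod>j\<in>S. x $ j)) = P * (\<Sum>j\<in>UNIV. x $ j / (1 + x $ j))"
    using sum_subsets_card_prod[of "UNIV::'n set" "\<lambda>j. x $ j"]
    by (simp add: omit_one sum_distrib_left)
  ultimately show ?thesis
    unfolding Hpoly_def Hpoly_second_factor P_def
    by (simp add: left_diff_distrib sum_subtractf right_diff_distrib)
qed

lemma Hpoly_eq_0_iff:
  fixes x :: "complex ^ 'n"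
  assumes "\<And>j. norm (x $ j) < 1"
  shows "Hpoly x = 0 \<longleftrightarrow> (\<Sum>j\<in>UNIV. x $ j / (1 + x $ j)) = 1"
proof -
  have "1 + x $ j \<noteq> 0" and "1 - x $ j \<noteq> 0" for j
    using assms[of j] by (auto simp: add_eq_0_iff)
  then show ?thesis
    by (simp add: Hpoly_eq)
qed


lemma Re_div_one_plus_le:
  fixes z :: complex
  assumes "norm z \<le> r" and "r < 1"
  shows "Re (z / (1 + z)) \<le> r / (1 + r)"
    and "Re (z / (1 + z)) = r / (1 + r) \<Longrightarrow> z = of_real r"
proof -
  define a b where "a = Re z" and "b = Im z"
  have "a\<^sup>2 + b\<^sup>2 = (norm z)\<^sup>2"
    by (simp add: cmod_power2 a_def b_def)
  also have "\<dots> \<le> r\<^sup>2"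
    using assms(1) by (simp add: power_mono)
  finally have abs_sq: "a\<^sup>2 + b\<^sup>2 \<le> r\<^sup>2" .
  have "\<bar>a\<bar> \<le> r"
    using abs_Re_le_cmod[of z] assms(1) by (simp add: a_def)
  then have a_le: "a \<le> r" and "0 < 1 + a" and "0 < 1 + r"
    using assms(2) by auto
  define D where "D = (1 + a)\<^sup>2 + b\<^sup>2"
  have "0 < D"
    using \<open>0 < 1 + a\<close> by (simp add: D_def add_pos_nonneg)
  have Re_eq: "Re (z / (1 + z)) = (a * (1 + a) + b\<^sup>2) / D"
    by (simp add: Re_divide D_def a_def b_def power2_eq_square)
  \<comment> \<open>both terms on the right are nonnegative, and vanish only for \<open>z = r\<close>\<close>
  have gap: "r * D - (a * (1 + a) + b\<^sup>2) * (1 + r) = (r - a) * (1 - r) + (r\<^sup>2 - (a\<^sup>2 + b\<^sup>2))"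
    by (simp add: D_def algebra_simps power2_eq_square)
  have nonneg: "0 \<le> (r - a) * (1 - r)"
    using a_le assms(2) by simp
  have Re_iff: "Re (z / (1 + z)) \<le> r / (1 + r) \<longleftrightarrow> (a * (1 + a) + b\<^sup>2) * (1 + r) \<le> r * D"
   and Re_eq_iff: "Re (z / (1 + z)) = r / (1 + r) \<longleftrightarrow> (a * (1 + a) + b\<^sup>2) * (1 + r) = r * D"
    unfolding Re_eq using \<open>0 < D\<close> \<open>0 < 1 + r\<close> by (simp_all add: divide_le_eq le_divide_eq frac_eq_eq)
  show "Re (z / (1 + z)) \<le> r / (1 + r)"
    unfolding Re_iff using gap nonneg abs_sq by linarith
  assume "Re (z / (1 + z)) = r / (1 + r)"
  with gap nonneg abs_sq have "(r - a) * (1 - r) = 0" and "a\<^sup>2 + b\<^sup>2 = r\<^sup>2"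
    unfolding Re_eq_iff by linarith+
  with assms(2) have "a = r" and "b = 0"
    by auto
  then show "z = of_real r"
    by (simp add: complex_eq_iff a_def b_def)
qed

lemma Hpoly_zero_in_polydisk_imp_eq:
  fixes x :: "complex ^ 'n"
  assumes "CARD('n) = d" and "d \<ge> 3"
    and norm_le: "\<And>j. norm (x $ j) \<le> 1 / (real d - 1)"
    and "Hpoly x = 0"
  shows "x $ j = of_real (1 / (real d - 1))"
proof -
  define r where "r = 1 / (real d - 1)"
  have "r < 1" and r_ratio: "r / (1 + r) = 1 / real d"
    using assms(2) by (simp_all add: r_def field_simps)
  have "norm (x $ k) < 1" for k
    using norm_le[of k] \<open>r < 1\<close> unfolding r_def by linarith
  then have "(\<Sum>k\<in>UNIV. x $ k / (1 + x $ k)) = 1"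
    using Hpoly_eq_0_iff \<open>Hpoly x = 0\<close> by blast
  then have "(\<Sum>k\<in>UNIV. Re (x $ k / (1 + x $ k))) = 1"
    by (simp flip: Re_sum)
  then have "(\<Sum>k\<in>UNIV. 1 / real d - Re (x $ k / (1 + x $ k))) = 0"
    using assms(1,2) by (simp add: sum_subtractf)
  moreover have Re_le: "Re (x $ k / (1 + x $ k)) \<le> 1 / real d" for k
    using Re_div_one_plus_le(1)[OF norm_le[of k, folded r_def] \<open>r < 1\<close>] r_ratio by simp
  ultimately have "Re (x $ j / (1 + x $ j)) = r / (1 + r)"
    unfolding r_ratio by (subst (asm) sum_nonneg_eq_0_iff) auto
  then show ?thesis
    unfolding r_def[symmetric] by (rule Re_div_one_plus_le(2)[OF norm_le[of j, folded r_def] \<open>r < 1\<close>])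
qed

theorem mainTheorem2:
  fixes d :: nat
  assumes "CARD('n::finite) = d" and "d \<ge> 3"
  shows "strictly_minimal_point {x :: complex ^ 'n. Hpoly x = 0}
           (\<chi> i. 1 / (of_nat d - 1))"
proof -
  define c :: "complex ^ 'n" where "c = (\<chi> i. 1 / (of_nat d - 1))"
  have c_nth: "c $ j = of_real (1 / (real d - 1))" for j
    by (simp add: c_def)
  have norm_c: "norm (c $ j) = 1 / (real d - 1)" for j
    unfolding c_nth norm_of_real using assms(2) by simp
  have "(of_nat d :: complex) \<noteq> 0" and "(of_nat d - 1 :: complex) \<noteq> 0"
    using assms(2) by (simp_all add: of_nat_diff[symmetric])
  then have "c $ j / (1 + c $ j) = 1 / of_nat d" for j
    by (simp add: c_def field_simps)
  then have "(\<Sum>j\<in>UNIV. c $ j / (1 + c $ j)) = 1"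
    using assms by simp
  moreover have "norm (c $ j) < 1" for j
    using assms(2) by (simp add: norm_c)
  ultimately have "Hpoly c = 0"
    using Hpoly_eq_0_iff by blast
  moreover have "x = c" if "Hpoly x = 0" and "x \<in> polydisk c" for x
  proof -
    have "norm (x $ j) \<le> 1 / (real d - 1)" for j
      using \<open>x \<in> polydisk c\<close> by (simp add: polydisk_def norm_c)
    then have "x $ j = c $ j" for j
      unfolding c_nth by (rule Hpoly_zero_in_polydisk_imp_eq[OF assms _ \<open>Hpoly x = 0\<close>])
    then show "x = c"
      by (simp add: vec_eq_iff)
  qed
  moreover have "c \<in> torus c" and "torus c \<subseteq> polydisk c"
    by (auto simp: torus_def polydisk_def)
  moreover have "\<forall>j. c $ j \<noteq> 0"
    using assms(2) by (simp add: c_nth)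
  ultimately show ?thesis
    unfolding strictly_minimal_point_def minimal_point_def c_def[symmetric] by blast
qed
end
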